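(* Let $A\in\mathbb{C}^{m\times n}$ have rank $r$ and satisfy $\mathrm{rank}(A^{\sim}AA^{\sim})=\mathrm{rank}(A)$. Then there exists a unique matrix $X\in\mathbb{C}^{n\times n}$ such that $AX=0$, $X^{\sim}=X$, $X^2=X$, $\mathrm{rank}(X)=n-r$; there exists a unique matrix $Y\in\mathbb{C}^{m\times m}$ such that $YA=0$, $Y^{\sim}=Y$, $Y^2=Y$, $\mathrm{rank}(Y)=m-r$; and, for these $X,Y$, there exists a unique matrix $Z\in\mathbb{C}^{n\times m}$ such that $$\mathrm{rank}\begin{pmatrix}A&I_m-Y\\ I_n-X&Z\end{pmatrix}=\mathrm{rank}(A).$$ Furthermore, $X=I_n-A^{\mathfrak{m}}A$, $Y=I_m-AA^{\mathfrak{m}}$ and $Z=A^{\mathfrak{m}}$.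
   Context: For a positive integer $k$, the Minkowski metric matrix of order $k$ is $G_k=\mathrm{diag}(1,-I_{k-1})$ (with $G_1=(1)$). For $M\in\mathbb{C}^{p\times q}$, the Minkowski adjoint is $M^{\sim}=G_qM^*G_p$, where $M^*$ is the conjugate transpose. The Minkowski inverse of $A\in\mathbb{C}^{m\times n}$, denoted $A^{\mathfrak{m}}$, is the (unique) matrix $W\in\mathbb{C}^{n\times m}$ with $AWA=A$, $WAW=W$, $(AW)^{\sim}=AW$, $(WA)^{\sim}=WA$, when it exists. *)

theory Defs
  imports "Jordan_Normal_Form.DL_Rank"
begin

definition crank :: "complex mat \<Rightarrow> nat" where
  "crank M = vec_space.rank (dim_row M) (M :: complex mat)"

definition minkowski_G :: "nat \<Rightarrow> complex mat" where
  "minkowski_G k = mat k k (\<lambda>(i,j). if i = j then (if i = 0 then 1 else -1) else 0)"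

definition ctrans :: "complex mat \<Rightarrow> complex mat" where
  "ctrans M = mat (dim_col M) (dim_row M) (\<lambda>(i,j). cnj (M $$ (j,i)))"

definition mink_adj :: "complex mat \<Rightarrow> complex mat" where
  "mink_adj M = minkowski_G (dim_col M) * ctrans M * minkowski_G (dim_row M)"

definition is_minkowski_inverse :: "complex mat \<Rightarrow> complex mat \<Rightarrow> bool" where
  "is_minkowski_inverse A W \<longleftrightarrow>
     W \<in> carrier_mat (dim_col A) (dim_row A) \<and>
     A * W * A = A \<and> W * A * W = W \<and>
     mink_adj (A * W) = A * W \<and> mink_adj (W * A) = W * A"

definition minkowski_inverse :: "complex mat \<Rightarrow> complex mat" where
  "minkowski_inverse A = (THE W. is_minkowski_inverse A W)"

end

theory Submission
  imports Defs
begin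

text \<open>
  Write \<open>B = A\<^sup>~\<close>. The rank condition makes the column space of \<open>B A B\<close> equal to that of
  \<open>B\<close> and, taking adjoints, the column space of \<open>A B A\<close> equal to that of \<open>A\<close>; so
  \<open>B = B A B U\<close> and \<open>A = A B A S\<close> for some \<open>U\<close>, \<open>S\<close>. From these, Zlobec's formula
  \<open>B (U A S\<^sup>~) B\<close> gives the Minkowski inverse \<open>W\<close>, unique by the usual Penrose argument.

  Since \<open>rank P + rank (1 - P) = n\<close> for an idempotent \<open>P\<close>, the matrix \<open>1 - W A\<close> is a
  Minkowski-selfadjoint idempotent of rank \<open>n - r\<close> annihilated by \<open>A\<close>. Any other such \<open>X\<close>
  satisfies \<open>(1 - W A) X = X\<close>; having the same rank, \<open>X\<close> and \<open>1 - W A\<close> have the same range,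
  and selfadjointness makes them equal. \<open>Y\<close> is the same statement for \<open>A\<^sup>~\<close>. Finally
  \<open>[[A, A W], [W A, Z]] = [[1, 0], [W, 1]] diag(A, Z - W) [[1, W], [0, 1]]\<close>, so this block
  matrix has rank \<open>rank A + rank (Z - W)\<close>, which equals \<open>rank A\<close> only for \<open>Z = W\<close>.
\<close>

section \<open>Rank of matrices over a field\<close>

lemma mult_unit_vec_eq_col:
  fixes A :: "'a::semiring_1 mat"
  assumes "A \<in> carrier_mat m n" and "i < n"
  shows "A *\<^sub>v unit_vec n i = col A i"
  using assms by (intro eq_vecI) auto

lemma zero_mat_mult_vec [simp]:
  "v \<in> carrier_vec k \<Longrightarrow> 0\<^sub>m m k *\<^sub>v v = (0\<^sub>v m :: 'a::semiring_0 vec)"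
  by (intro eq_vecI) (auto simp: scalar_prod_def)

lemma mult_mat_vec_zero_vec [simp]:
  "A \<in> carrier_mat m k \<Longrightarrow> A *\<^sub>v 0\<^sub>v k = (0\<^sub>v m :: 'a::semiring_0 vec)"
  by (intro eq_vecI) (auto simp: scalar_prod_def)

lemma cols_mult: "cols (A * B) = map ((*\<^sub>v) A) (cols B)"
  by (rule nth_equalityI) (auto simp: col_def mult_mat_vec_def)

lemma mult_mat_of_cols:
  assumes "set vs \<subseteq> carrier_vec k"
  shows "A * mat_of_cols k vs = mat_of_cols (dim_row A) (map ((*\<^sub>v) A) vs)"
  by (metis assms cols_mat_of_cols cols_mult index_mult_mat(2) mat_of_cols_carrier(2) mat_of_cols_cols)

lemma zero_append_zero_vec: "0\<^sub>v m @\<^sub>v 0\<^sub>v n = (0\<^sub>v (m + n) :: 'a::zero vec)"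
  by (intro eq_vecI) auto

lemma uminus_zero_mat: "- 0\<^sub>m m n = (0\<^sub>m m n :: 'a::group_add mat)"
  by (intro eq_matI) auto

lemma minus_zero_mat [simp]: "A \<in> carrier_mat m n \<Longrightarrow> A - 0\<^sub>m m n = (A :: 'a::group_add mat)"
  by (intro eq_matI) auto

lemma assoc_mult_mat_dims:
  fixes A :: "'a::semiring_0 mat"
  shows "dim_col A = dim_row B \<Longrightarrow> dim_col B = dim_row C \<Longrightarrow> A * B * C = A * (B * C)"
  by (rule assoc_mult_mat[of A "dim_row A" "dim_col A" B "dim_col B" C "dim_col C"]) auto

lemma idempotent_one_minus:
  fixes P :: "'a::ring_1 mat"
  assumes P: "P \<in> carrier_mat n n" and PP: "P * P = P"
  shows "(1\<^sub>m n - P) * (1\<^sub>m n - P) = 1\<^sub>m n - P"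
proof -
  have "(1\<^sub>m n - P) * (1\<^sub>m n - P) = 1\<^sub>m n * (1\<^sub>m n - P) - P * (1\<^sub>m n - P)"
    using minus_mult_distrib_mat[OF one_carrier_mat P minus_carrier_mat[OF P]] .
  also have "\<dots> = (1\<^sub>m n - P) - (P * 1\<^sub>m n - P * P)"
    using P mult_minus_distrib_mat[OF P one_carrier_mat P] by simp
  also have "\<dots> = 1\<^sub>m n - P" unfolding PP using P by (intro eq_matI) auto
  finally show ?thesis .
qed

definition inj_mat :: "'a::field mat \<Rightarrow> bool" where
  "inj_mat C \<longleftrightarrow>
     (\<forall>x \<in> carrier_vec (dim_col C). C *\<^sub>v x = 0\<^sub>v (dim_row C) \<longrightarrow> x = 0\<^sub>v (dim_col C))"

lemma inj_matD:
  "inj_mat C \<Longrightarrow> C \<in> carrier_mat m k \<Longrightarrow> x \<in> carrier_vec k \<Longrightarrow> C *\<^sub>v x = 0\<^sub>v m \<Longrightarrow> x = 0\<^sub>v k"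
  unfolding inj_mat_def by auto

lemma inj_mat_of_inj_mat_mult:
  fixes A B :: "'a::field mat"
  assumes A: "A \<in> carrier_mat m k" and B: "B \<in> carrier_mat k s" and inj: "inj_mat (A * B)"
  shows "inj_mat B"
  unfolding inj_mat_def
proof (intro ballI impI)
  fix x assume x: "x \<in> carrier_vec (dim_col B)" and "B *\<^sub>v x = 0\<^sub>v (dim_row B)"
  then have "(A * B) *\<^sub>v x = 0\<^sub>v m" using A B by simp
  then show "x = 0\<^sub>v (dim_col B)" using inj_matD[OF inj mult_carrier_mat[OF A B]] x B by simp
qed

lemma inj_mat_block_diag:
  fixes C1 C2 :: "'a::field mat"
  assumes C1: "C1 \<in> carrier_mat m1 k1" and C2: "C2 \<in> carrier_mat m2 k2"
    and inj1: "inj_mat C1" and inj2: "inj_mat C2"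
  shows "inj_mat (four_block_mat C1 (0\<^sub>m m1 k2) (0\<^sub>m m2 k1) C2)"
  unfolding inj_mat_def
proof (intro ballI impI)
  let ?K = "four_block_mat C1 (0\<^sub>m m1 k2) (0\<^sub>m m2 k1) C2"
  fix x assume x: "x \<in> carrier_vec (dim_col ?K)" and Kx: "?K *\<^sub>v x = 0\<^sub>v (dim_row ?K)"
  define a where "a = vec_first x k1"
  define d where "d = vec_last x k2"
  have a: "a \<in> carrier_vec k1" and d: "d \<in> carrier_vec k2" unfolding a_def d_def by simp_all
  have xad: "x = a @\<^sub>v d" unfolding a_def d_def using x C1 C2 by simp
  have "(C1 *\<^sub>v a) @\<^sub>v (C2 *\<^sub>v d) = 0\<^sub>v (m1 + m2)"
    using Kx four_block_mat_mult_vec[OF C1 _ _ C2 a d] C1 C2 a d by (simp add: xad)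
  then have "(C1 *\<^sub>v a) @\<^sub>v (C2 *\<^sub>v d) = 0\<^sub>v m1 @\<^sub>v 0\<^sub>v m2"
    by (simp add: zero_append_zero_vec)
  then have "C1 *\<^sub>v a = 0\<^sub>v m1" and "C2 *\<^sub>v d = 0\<^sub>v m2"
    using append_vec_eq[OF mult_mat_vec_carrier[OF C1 a] zero_carrier_vec] by auto
  then have "a = 0\<^sub>v k1" and "d = 0\<^sub>v k2" using inj_matD inj1 inj2 C1 C2 a d by blast+
  then show "x = 0\<^sub>v (dim_col ?K)" using xad C1 C2 by (simp add: zero_append_zero_vec)
qed

lemma factor_through_of_cols_in_image:
  fixes M C :: "'a::field mat"
  assumes M: "M \<in> carrier_mat m nc" and C: "C \<in> carrier_mat m k"
    and image: "\<And>j. j < nc \<Longrightarrow> \<exists>f \<in> carrier_vec k. col M j = C *\<^sub>v f"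
  shows "\<exists>F \<in> carrier_mat k nc. M = C * F"
proof -
  obtain f where f: "\<And>j. j < nc \<Longrightarrow> f j \<in> carrier_vec k \<and> col M j = C *\<^sub>v f j"
    using image by metis
  define F where "F = mat_of_cols k (map f [0..<nc])"
  have F: "F \<in> carrier_mat k nc" unfolding F_def using mat_of_cols_carrier(1)[of k "map f [0..<nc]"] by simp
  have "M = C * F"
  proof (rule mat_col_eqI)
    fix j assume "j < dim_col (C * F)"
    then have j: "j < nc" using F by simp
    have "col (C * F) j = C *\<^sub>v col F j" using col_mult2[OF C F j] .
    also have "col F j = f j" unfolding F_def using j f by simp
    finally show "col M j = col (C * F) j" using f j by simp
  qed (use C F M in auto)
  with F show ?thesis by blast
qed

context vec_space
begin

lemma inj_mat_imp_distinct_cols: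
  fixes C :: "'a mat"
  assumes C: "C \<in> carrier_mat n k" and inj: "inj_mat C"
  shows "distinct (cols C)"
  unfolding distinct_conv_nth
proof (intro allI impI)
  fix i j assume "i < length (cols C)" "j < length (cols C)" "i \<noteq> j"
  then have ij: "i < k" "j < k" "i \<noteq> j" using C by auto
  let ?x = "unit_vec k i - unit_vec k j :: 'a vec"
  show "cols C ! i \<noteq> cols C ! j"
  proof
    assume "cols C ! i = cols C ! j"
    then have "C *\<^sub>v ?x = 0\<^sub>v n"
      using ij C by (simp add: mult_minus_distrib_mat_vec mult_unit_vec_eq_col)
    then have "?x = 0\<^sub>v k" using inj_matD[OF inj C] by simp
    moreover have "?x $ i = 1" using ij by simp
    ultimately show False using ij by simp
  qed
qed

lemma inj_mat_imp_lin_indpt: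
  fixes C :: "'a mat"
  assumes C: "C \<in> carrier_mat n k" and inj: "inj_mat C"
  shows "lin_indpt (set (cols C))"
proof
  assume "lin_dep (set (cols C))"
  then obtain v where "v \<in> carrier_vec k" "v \<noteq> 0\<^sub>v k" "C *\<^sub>v v = 0\<^sub>v n"
    using lin_depE[OF C _ inj_mat_imp_distinct_cols[OF C inj]] by blast
  then show False using inj_matD[OF inj C] by blast
qed

lemma lin_indpt_imp_inj_mat:
  fixes C :: "'a mat"
  assumes C: "C \<in> carrier_mat n k" and "distinct (cols C)" and "lin_indpt (set (cols C))"
  shows "inj_mat C"
  unfolding inj_mat_def
proof (intro ballI impI)
  fix x assume "x \<in> carrier_vec (dim_col C)" "C *\<^sub>v x = 0\<^sub>v (dim_row C)"
  then show "x = 0\<^sub>v (dim_col C)" using lin_depI[OF C] assms C by fastforce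
qed

lemma inj_mat_dim_le:
  fixes C :: "'a mat"
  assumes C: "C \<in> carrier_mat n k" and inj: "inj_mat C"
  shows "k \<le> n"
proof -
  have "set (cols C) \<subseteq> carrier_vec n" using C cols_dim by blast
  then have "card (set (cols C)) \<le> dim"
    using li_le_dim(2)[OF fin_dim _ inj_mat_imp_lin_indpt[OF C inj]] by simp
  then show ?thesis
    using distinct_card[OF inj_mat_imp_distinct_cols[OF C inj]] C dim_is_n by simp
qed

lemma mem_span_imp_mat_of_cols_mult:
  assumes "v \<in> span (set cs)" and "set cs \<subseteq> carrier_vec n"
  shows "\<exists>f \<in> carrier_vec (length cs). v = mat_of_cols n cs *\<^sub>v f"
proof -
  obtain c where "v = lincomb_list c cs"
    using assms span_list_as_span[of cs] unfolding span_list_def by auto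
  also have "\<dots> = mat_of_cols n cs *\<^sub>v vec (length cs) c"
    by (rule lincomb_list_as_mat_mult) (use assms in auto)
  finally show ?thesis by auto
qed

lemma maximal_lin_indpt_span:
  assumes Vs: "Vs \<subseteq> carrier_vec n" and maxS: "maximal S (\<lambda>T. T \<subseteq> Vs \<and> lin_indpt T)"
  shows "Vs \<subseteq> span S"
proof
  fix v assume v: "v \<in> Vs"
  have SV: "S \<subseteq> Vs" and liS: "lin_indpt S" using maxS unfolding maximal_def by auto
  have Sc: "S \<subseteq> carrier_vec n" using SV Vs by blast
  show "v \<in> span S"
  proof (rule ccontr)
    assume not_span: "v \<notin> span S"
    then have "v \<notin> S" using in_own_span[OF Sc] by blast
    then have "lin_indpt (S \<union> {v})"
      using lin_dep_iff_in_span[OF Sc liS] not_span v Vs by blast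
    then have "S \<union> {v} = S" using maxS SV v unfolding maximal_def by blast
    with \<open>v \<notin> S\<close> show False by blast
  qed
qed

lemma rank_factorization:
  fixes M :: "'a mat"
  assumes M: "M \<in> carrier_mat n nc"
  obtains C G F where "C \<in> carrier_mat n (rank M)" "G \<in> carrier_mat nc (rank M)"
    "F \<in> carrier_mat (rank M) nc" "C = M * G" "M = C * F" "inj_mat C"
proof -
  obtain S where maxS: "maximal S (\<lambda>T. T \<subseteq> set (cols M) \<and> lin_indpt T)"
    using maximal_exists[of "\<lambda>T. T \<subseteq> set (cols M) \<and> lin_indpt T" "card (set (cols M))" "{}"]
    by (meson List.finite_set card_mono empty_iff empty_subsetI finite_lin_indpt2 rev_finite_subset)
  have SM: "S \<subseteq> set (cols M)" and liS: "lin_indpt S" using maxS unfolding maximal_def by auto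
  have colsM: "set (cols M) \<subseteq> carrier_vec n" using M cols_dim by blast
  have Sc: "S \<subseteq> carrier_vec n" using SM colsM by blast
  obtain cs where cs: "set cs = S" "distinct cs"
    using finite_distinct_list[OF finite_subset[OF SM]] by blast
  define C where "C = mat_of_cols n cs"
  have rk: "rank M = length cs" using rank_card_indpt[OF M maxS] cs distinct_card by metis
  have C: "C \<in> carrier_mat n (rank M)" unfolding C_def rk by simp
  have colsC: "cols C = cs" unfolding C_def using cs Sc by simp
  have "inj_mat C" by (rule lin_indpt_imp_inj_mat[OF C]) (use colsC cs liS in auto)
  moreover have "\<exists>G \<in> carrier_mat nc (rank M). C = M * G"
  proof (rule factor_through_of_cols_in_image[OF C M])
    fix i assume "i < rank M"
    then have "col C i = cs ! i" "cs ! i \<in> S"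
      using cols_nth[of i C] colsC C cs rk by (simp_all, metis nth_mem)
    then have "col C i \<in> set (cols M)" using SM by auto
    then obtain j where "j < nc" "col C i = col M j" using M by (metis cols_length cols_nth in_set_conv_nth carrier_matD(2))
    then show "\<exists>f \<in> carrier_vec nc. col C i = M *\<^sub>v f"
      using mult_unit_vec_eq_col[OF M] unit_vec_carrier by metis
  qed
  moreover have "\<exists>F \<in> carrier_mat (rank M) nc. M = C * F"
  proof (rule factor_through_of_cols_in_image[OF M C])
    fix j assume j: "j < nc"
    let ?v = "col M j"
    have "?v \<in> set (cols M)" using M j by (metis cols_length cols_nth nth_mem carrier_matD(2))
    then have "?v \<in> span S" using maximal_lin_indpt_span[OF colsM maxS] by blast
    then show "\<exists>f \<in> carrier_vec (rank M). ?v = C *\<^sub>v f"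
      using mem_span_imp_mat_of_cols_mult[of ?v cs] cs Sc unfolding C_def rk by auto
  qed
  ultimately show ?thesis using that C by blast
qed

lemma rank_le_of_factor:
  fixes M C F :: "'a mat"
  assumes C: "C \<in> carrier_mat n k" and F: "F \<in> carrier_mat k nc" and M: "M = C * F"
  shows "rank M \<le> k"
proof -
  have "M \<in> carrier_mat n nc" using C F M by simp
  then obtain C' G where G: "G \<in> carrier_mat nc (rank M)" and "C' = M * G" and inj: "inj_mat C'"
    using rank_factorization by blast
  then have "C' = C * (F * G)" using C F M by simp
  then have "inj_mat (F * G)"
    using inj_mat_of_inj_mat_mult[OF C mult_carrier_mat[OF F G]] inj by simp
  then show ?thesis using vec_space.inj_mat_dim_le[OF mult_carrier_mat[OF F G]] by simp
qed

lemma rank_ge_of_inj: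
  fixes M K H :: "'a mat"
  assumes M: "M \<in> carrier_mat n nc" and H: "H \<in> carrier_mat nc s"
    and K: "K = M * H" and inj: "inj_mat K"
  shows "s \<le> rank M"
proof -
  obtain C F where C: "C \<in> carrier_mat n (rank M)" and F: "F \<in> carrier_mat (rank M) nc"
    and "M = C * F"
    using rank_factorization[OF M] by blast
  then have "K = C * (F * H)" using K H by simp
  then have "inj_mat (F * H)"
    using inj_mat_of_inj_mat_mult[OF C mult_carrier_mat[OF F H]] inj by simp
  then show ?thesis using vec_space.inj_mat_dim_le[OF mult_carrier_mat[OF F H]] by simp
qed

lemma rank_mult_le_left:
  fixes A B :: "'a mat"
  assumes A: "A \<in> carrier_mat n k" and B: "B \<in> carrier_mat k nc"
  shows "rank (A * B) \<le> rank A"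
proof -
  obtain C F where C: "C \<in> carrier_mat n (rank A)" and F: "F \<in> carrier_mat (rank A) k"
    and "A = C * F"
    using rank_factorization[OF A] by blast
  then have "A * B = C * (F * B)" using B by simp
  then show ?thesis using rank_le_of_factor[OF C mult_carrier_mat[OF F B]] by simp
qed

lemma rank_mult_le_right:
  fixes A B :: "'a mat"
  assumes A: "A \<in> carrier_mat n k" and B: "B \<in> carrier_mat k nc"
  shows "rank (A * B) \<le> vec_space.rank k B"
proof -
  obtain C F where C: "C \<in> carrier_mat k (vec_space.rank k B)"
    and F: "F \<in> carrier_mat (vec_space.rank k B) nc" and "B = C * F"
    using vec_space.rank_factorization[OF B] by blast
  then have "A * B = (A * C) * F" using A by simp
  then show ?thesis using rank_le_of_factor[OF mult_carrier_mat[OF A C] F] by simp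
qed

lemma inj_mat_append_col:
  fixes C :: "'a mat"
  assumes C: "C \<in> carrier_mat n k" and inj: "inj_mat C" and b: "b \<in> carrier_vec n"
    and not_image: "\<forall>f \<in> carrier_vec k. b \<noteq> C *\<^sub>v f"
  shows "inj_mat (mat_of_cols n (cols C @ [b]))"
proof -
  have Cc: "set (cols C) \<subseteq> carrier_vec n" using C cols_dim by blast
  have not_span: "b \<notin> span (set (cols C))"
  proof
    assume "b \<in> span (set (cols C))"
    then obtain f where "f \<in> carrier_vec (length (cols C))" "b = mat_of_cols n (cols C) *\<^sub>v f"
      using mem_span_imp_mat_of_cols_mult[OF _ Cc] by blast
    then show False using not_image C by (metis carrier_matD cols_length mat_of_cols_cols)
  qed
  then have "b \<notin> set (cols C)" using in_own_span[OF Cc] by blast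
  moreover have "lin_indpt (set (cols C) \<union> {b})"
    using lin_dep_iff_in_span[OF Cc inj_mat_imp_lin_indpt[OF C inj] b] not_span calculation by simp
  moreover have "mat_of_cols n (cols C @ [b]) \<in> carrier_mat n (k + 1)"
    using C mat_of_cols_carrier(1)[of n "cols C @ [b]"] by simp
  ultimately show ?thesis
    using lin_indpt_imp_inj_mat inj_mat_imp_distinct_cols[OF C inj] Cc b by simp
qed

lemma factor_through_of_rank_le:
  fixes M X N :: "'a mat"
  assumes M: "M \<in> carrier_mat n nc" and X: "X \<in> carrier_mat nc p" and N: "N = M * X"
    and le: "rank M \<le> rank N"
  shows "\<exists>Y \<in> carrier_mat p nc. M = N * Y"
proof -
  have Nc: "N \<in> carrier_mat n p" using M X N by simp
  then obtain C G where C: "C \<in> carrier_mat n (rank N)" and G: "G \<in> carrier_mat p (rank N)"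
    and CNG: "C = N * G" and inj: "inj_mat C"
    using rank_factorization by blast
  (* A column of M outside the range of C would extend the columns of C = M (X G) to
     rank N + 1 independent columns in the range of M. *)
  have "\<exists>F \<in> carrier_mat (rank N) nc. M = C * F"
  proof (rule factor_through_of_cols_in_image[OF M C], rule ccontr)
    fix j assume j: "j < nc" and not_image: "\<not> (\<exists>f \<in> carrier_vec (rank N). col M j = C *\<^sub>v f)"
    define H where "H = mat_of_cols nc (cols (X * G) @ [unit_vec nc j])"
    have H: "H \<in> carrier_mat nc (rank N + 1)"
      unfolding H_def using mat_of_cols_carrier(1)[of nc "cols (X * G) @ [unit_vec nc j]"] X G by simp
    have XG: "set (cols (X * G)) \<subseteq> carrier_vec nc" using X G cols_dim by (metis carrier_matD(1) index_mult_mat(2))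
    have "M * H = mat_of_cols n (map ((*\<^sub>v) M) (cols (X * G)) @ [M *\<^sub>v unit_vec nc j])"
      unfolding H_def using mult_mat_of_cols[of _ nc M] XG M by simp
    also have "map ((*\<^sub>v) M) (cols (X * G)) = cols C"
      unfolding CNG N cols_mult[symmetric] using M X G by simp
    also have "M *\<^sub>v unit_vec nc j = col M j" using mult_unit_vec_eq_col[OF M j] .
    finally have "M * H = mat_of_cols n (cols C @ [col M j])" .
    moreover have "inj_mat (mat_of_cols n (cols C @ [col M j]))"
      using inj_mat_append_col[OF C inj] not_image M j by auto
    ultimately have "rank N + 1 \<le> rank M" using rank_ge_of_inj[OF M H] by metis
    then show False using le by simp
  qed
  then obtain F where F: "F \<in> carrier_mat (rank N) nc" and "M = C * F" by blast
  from \<open>M = C * F\<close> have "M = N * G * F" unfolding CNG .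
  also have "\<dots> = N * (G * F)" by (rule assoc_mult_mat[OF Nc G F])
  finally show ?thesis using mult_carrier_mat[OF G F] by blast
qed

lemma rank_mult_left_invertible:
  fixes P P' M :: "'a mat"
  assumes P: "P \<in> carrier_mat n n" and P': "P' \<in> carrier_mat n n" and inv: "P' * P = 1\<^sub>m n"
    and M: "M \<in> carrier_mat n nc"
  shows "rank (P * M) = rank M"
proof (rule antisym)
  show "rank (P * M) \<le> rank M" using rank_mult_le_right[OF P M] .
  have "rank M = rank (P' * P * M)" using M inv by simp
  also have "\<dots> = rank (P' * (P * M))" using assoc_mult_mat[OF P' P M] by simp
  also have "\<dots> \<le> rank (P * M)" using rank_mult_le_right[OF P' mult_carrier_mat[OF P M]] .
  finally show "rank M \<le> rank (P * M)" .
qed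

lemma rank_mult_right_invertible:
  fixes Q Q' M :: "'a mat"
  assumes Q: "Q \<in> carrier_mat nc nc" and Q': "Q' \<in> carrier_mat nc nc" and inv: "Q * Q' = 1\<^sub>m nc"
    and M: "M \<in> carrier_mat n nc"
  shows "rank (M * Q) = rank M"
proof (rule antisym)
  show "rank (M * Q) \<le> rank M" using rank_mult_le_left[OF M Q] .
  have "rank M = rank (M * Q * Q')" using Q Q' M inv by simp
  also have "\<dots> \<le> rank (M * Q)" using rank_mult_le_left[OF mult_carrier_mat[OF M Q] Q'] .
  finally show "rank M \<le> rank (M * Q)" .
qed

lemma rank_one_mat: "rank (1\<^sub>m n) = n"
  using det_rank_iff[OF one_carrier_mat] by simp

lemma rank_eq_0_imp_zero:
  fixes M :: "'a mat"
  assumes M: "M \<in> carrier_mat n nc" and "rank M = 0"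
  shows "M = 0\<^sub>m n nc"
proof -
  obtain C F where "C \<in> carrier_mat n 0" "F \<in> carrier_mat 0 nc" "M = C * F"
    using rank_factorization[OF M, unfolded \<open>rank M = 0\<close>] by blast
  then show ?thesis by (intro eq_matI) (auto simp: scalar_prod_def)
qed

lemma idempotent_mult_absorb_of_rank_le:
  fixes P Q :: "'a mat"
  assumes P: "P \<in> carrier_mat n n" and Q: "Q \<in> carrier_mat n n"
    and QQ: "Q * Q = Q" and PQ: "P * Q = Q" and le: "rank P \<le> rank Q"
  shows "Q * P = P"
proof -
  obtain Y where Y: "Y \<in> carrier_mat n n" and PY: "P = Q * Y"
    using factor_through_of_rank_le[OF P Q PQ[symmetric] le] by blast
  have "Q * P = Q * Q * Y" unfolding PY using Q Y by simp
  also have "\<dots> = P" by (simp only: QQ PY)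
  finally show ?thesis .
qed

end

lemma rank_ginverse_mult:
  fixes A W :: "'a::field mat"
  assumes A: "A \<in> carrier_mat m n" and W: "W \<in> carrier_mat n m" and AWA: "A * W * A = A"
  shows "vec_space.rank n (W * A) = vec_space.rank m A"
proof (rule antisym)
  show "vec_space.rank n (W * A) \<le> vec_space.rank m A" using vec_space.rank_mult_le_right[OF W A] .
  have "A * (W * A) = A" using assoc_mult_mat[OF A W A] AWA by simp
  then show "vec_space.rank m A \<le> vec_space.rank n (W * A)"
    using vec_space.rank_mult_le_right[OF A mult_carrier_mat[OF W A]] by simp
qed

lemma rank_block_diag:
  fixes A D :: "'a::field mat"
  assumes A: "A \<in> carrier_mat m1 n1" and D: "D \<in> carrier_mat m2 n2"
  shows "vec_space.rank (m1 + m2) (four_block_mat A (0\<^sub>m m1 n2) (0\<^sub>m m2 n1) D)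
       = vec_space.rank m1 A + vec_space.rank m2 D"
    (is "vec_space.rank _ ?M = ?r1 + ?r2")
proof -
  obtain C1 G1 F1 where C1: "C1 \<in> carrier_mat m1 ?r1" and G1: "G1 \<in> carrier_mat n1 ?r1"
    and F1: "F1 \<in> carrier_mat ?r1 n1" and "C1 = A * G1" "A = C1 * F1" "inj_mat C1"
    using vec_space.rank_factorization[OF A] by blast
  obtain C2 G2 F2 where C2: "C2 \<in> carrier_mat m2 ?r2" and G2: "G2 \<in> carrier_mat n2 ?r2"
    and F2: "F2 \<in> carrier_mat ?r2 n2" and "C2 = D * G2" "D = C2 * F2" "inj_mat C2"
    using vec_space.rank_factorization[OF D] by blast
  define K where "K = four_block_mat C1 (0\<^sub>m m1 ?r2) (0\<^sub>m m2 ?r1) C2"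
  have M: "?M \<in> carrier_mat (m1 + m2) (n1 + n2)" using A D by simp
  have K: "K \<in> carrier_mat (m1 + m2) (?r1 + ?r2)" unfolding K_def using C1 C2 by simp
  have "?M = K * four_block_mat F1 (0\<^sub>m ?r1 n2) (0\<^sub>m ?r2 n1) F2"
    unfolding K_def using C1 C2 F1 F2 \<open>A = C1 * F1\<close> \<open>D = C2 * F2\<close>
    by (simp add: mult_four_block_mat[OF C1 _ _ C2 F1 _ _ F2])
  then have le: "vec_space.rank (m1 + m2) ?M \<le> ?r1 + ?r2"
    using vec_space.rank_le_of_factor[OF K four_block_carrier_mat[OF F1 F2]] by simp
  have "K = ?M * four_block_mat G1 (0\<^sub>m n1 ?r2) (0\<^sub>m n2 ?r1) G2"
    unfolding K_def using A D G1 G2 \<open>C1 = A * G1\<close> \<open>C2 = D * G2\<close>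
    by (simp add: mult_four_block_mat[OF A _ _ D G1 _ _ G2])
  moreover have "inj_mat K"
    unfolding K_def using inj_mat_block_diag[OF C1 C2] \<open>inj_mat C1\<close> \<open>inj_mat C2\<close> .
  ultimately have "?r1 + ?r2 \<le> vec_space.rank (m1 + m2) ?M"
    using vec_space.rank_ge_of_inj[OF M four_block_carrier_mat[OF G1 G2]] by blast
  with le show ?thesis by simp
qed

lemma four_block_unipotent_lower_inverse:
  fixes W :: "'a::ring_1 mat"
  assumes W: "W \<in> carrier_mat n m"
  shows "four_block_mat (1\<^sub>m m) (0\<^sub>m m n) (- W) (1\<^sub>m n) * four_block_mat (1\<^sub>m m) (0\<^sub>m m n) W (1\<^sub>m n)
       = 1\<^sub>m (m + n)"
  using W by (simp add: mult_four_block_mat[OF one_carrier_mat zero_carrier_mat uminus_carrier_mat[OF W]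
      one_carrier_mat one_carrier_mat zero_carrier_mat W one_carrier_mat])

lemma four_block_unipotent_upper_inverse:
  fixes W :: "'a::ring_1 mat"
  assumes W: "W \<in> carrier_mat n m"
  shows "four_block_mat (1\<^sub>m n) W (0\<^sub>m m n) (1\<^sub>m m) * four_block_mat (1\<^sub>m n) (- W) (0\<^sub>m m n) (1\<^sub>m m)
       = 1\<^sub>m (n + m)"
  using W by (simp add: uminus_zero_mat mult_four_block_mat[OF one_carrier_mat W zero_carrier_mat
      one_carrier_mat one_carrier_mat uminus_carrier_mat[OF W] zero_carrier_mat one_carrier_mat])

lemma rank_block_reflexive_ginverse:
  fixes A W Z :: "'a::field mat"
  assumes A: "A \<in> carrier_mat m n" and W: "W \<in> carrier_mat n m" and Z: "Z \<in> carrier_mat n m"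
    and AWA: "A * W * A = A" and WAW: "W * A * W = W"
  shows "vec_space.rank (m + n) (four_block_mat A (A * W) (W * A) Z)
       = vec_space.rank m A + vec_space.rank n (Z - W)"
proof -
  define L where "L = four_block_mat (1\<^sub>m m) (0\<^sub>m m n) W (1\<^sub>m n)"
  define L' where "L' = four_block_mat (1\<^sub>m m) (0\<^sub>m m n) (- W) (1\<^sub>m n)"
  define R where "R = four_block_mat (1\<^sub>m n) W (0\<^sub>m m n) (1\<^sub>m m)"
  define R' where "R' = four_block_mat (1\<^sub>m n) (- W) (0\<^sub>m m n) (1\<^sub>m m)"
  define D where "D = four_block_mat A (0\<^sub>m m m) (0\<^sub>m n n) (Z - W)"
  have L: "L \<in> carrier_mat (m + n) (m + n)" and L': "L' \<in> carrier_mat (m + n) (m + n)"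
    and R: "R \<in> carrier_mat (n + m) (n + m)" and R': "R' \<in> carrier_mat (n + m) (n + m)"
    and D: "D \<in> carrier_mat (m + n) (n + m)"
    unfolding L_def L'_def R_def R'_def D_def using A W Z by auto
  have L'L: "L' * L = 1\<^sub>m (m + n)"
    unfolding L_def L'_def by (rule four_block_unipotent_lower_inverse[OF W])
  have RR': "R * R' = 1\<^sub>m (n + m)"
    unfolding R_def R'_def by (rule four_block_unipotent_upper_inverse[OF W])
  have "four_block_mat A (A * W) (W * A) Z = L * (D * R)"
  proof -
    have "L * D = four_block_mat A (0\<^sub>m m m) (W * A) (Z - W)"
      unfolding L_def D_def using A W Z minus_carrier_mat[OF W, of Z]
      by (simp add: mult_four_block_mat[OF one_carrier_mat zero_carrier_mat W one_carrier_mat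
            A zero_carrier_mat zero_carrier_mat minus_carrier_mat[OF W]])
    moreover have "W * A * W + (Z - W) = Z" using WAW W Z by auto
    ultimately show ?thesis
      using assoc_mult_mat[OF L D R] unfolding R_def using A W Z
      by (simp add: mult_four_block_mat[OF A zero_carrier_mat mult_carrier_mat[OF W A]
            minus_carrier_mat[OF W] one_carrier_mat W zero_carrier_mat one_carrier_mat])
  qed
  then have "vec_space.rank (m + n) (four_block_mat A (A * W) (W * A) Z)
      = vec_space.rank (m + n) (D * R)"
    using vec_space.rank_mult_left_invertible[OF L L' L'L mult_carrier_mat[OF D R]] by simp
  also have "\<dots> = vec_space.rank (m + n) D"
    using vec_space.rank_mult_right_invertible[OF R R' RR' D] .
  also have "\<dots> = vec_space.rank m A + vec_space.rank n (Z - W)"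
    unfolding D_def by (rule rank_block_diag[OF A minus_carrier_mat[OF W]])
  finally show ?thesis .
qed

text \<open>The bound \<open>rank P + rank (1 - P) \<le> n\<close> comes from the factorisation
  \<open>[[P, P], [P, 1]] = [P; 1] [P, 1]\<close> through \<open>n\<close> columns.\<close>

lemma rank_idempotent_add_rank_compl:
  fixes P :: "'a::field mat"
  assumes P: "P \<in> carrier_mat n n" and PP: "P * P = P"
  shows "vec_space.rank n P + vec_space.rank n (1\<^sub>m n - P) = n"
proof (rule antisym)
  have "vec_space.rank n P + vec_space.rank n (1\<^sub>m n - P)
      = vec_space.rank (n + n) (four_block_mat P P P (1\<^sub>m n))"
    using rank_block_reflexive_ginverse[OF P P one_carrier_mat] PP by simp
  also have "four_block_mat P P P (1\<^sub>m n)
      = four_block_mat P (0\<^sub>m n 0) (1\<^sub>m n) (0\<^sub>m n 0) * four_block_mat P (1\<^sub>m n) (0\<^sub>m 0 n) (0\<^sub>m 0 n)"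
    using P PP by (simp add: mult_four_block_mat[OF P zero_carrier_mat one_carrier_mat zero_carrier_mat
          P one_carrier_mat zero_carrier_mat zero_carrier_mat])
  also have "vec_space.rank (n + n) \<dots> \<le> n"
  proof (rule vec_space.rank_le_of_factor[OF _ _ refl])
    show "four_block_mat P (0\<^sub>m n 0) (1\<^sub>m n) (0\<^sub>m n 0) \<in> carrier_mat (n + n) n"
      and "four_block_mat P (1\<^sub>m n) (0\<^sub>m 0 n) (0\<^sub>m 0 n) \<in> carrier_mat n (n + n)"
      using P by auto
  qed
  finally show "vec_space.rank n P + vec_space.rank n (1\<^sub>m n - P) \<le> n" .
  have "P + (1\<^sub>m n - P) = 1\<^sub>m n" using P by (intro eq_matI) auto
  then show "n \<le> vec_space.rank n P + vec_space.rank n (1\<^sub>m n - P)"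
    using vec_space.rank_subadditive[OF P minus_carrier_mat[OF P]] vec_space.rank_one_mat by metis
qed

section \<open>The Minkowski adjoint\<close>

lemma crank_carrier: "M \<in> carrier_mat m n \<Longrightarrow> crank M = vec_space.rank m M"
  unfolding crank_def by simp

lemma minkowski_G_carrier [simp]: "minkowski_G k \<in> carrier_mat k k"
  and minkowski_G_dims [simp]: "dim_row (minkowski_G k) = k" "dim_col (minkowski_G k) = k"
  unfolding minkowski_G_def by auto

lemma minkowski_G_mult_self [simp]: "minkowski_G k * minkowski_G k = 1\<^sub>m k"
proof (rule eq_matI)
  fix i j assume "i < dim_row (1\<^sub>m k)" "j < dim_col (1\<^sub>m k)"
  then have i: "i < k" and j: "j < k" by auto
  have "(minkowski_G k * minkowski_G k) $$ (i, j)
      = (\<Sum>l \<in> {0..<k}. minkowski_G k $$ (i, l) * minkowski_G k $$ (l, j))"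
    using i j by (simp add: scalar_prod_def)
  also have "\<dots> = (\<Sum>l \<in> {0..<k}. if l = i then (if i = 0 then 1 else -1) * minkowski_G k $$ (i, j) else 0)"
    by (rule sum.cong) (use i in \<open>auto simp: minkowski_G_def\<close>)
  also have "\<dots> = 1\<^sub>m k $$ (i, j)" using i j by (simp add: minkowski_G_def)
  finally show "(minkowski_G k * minkowski_G k) $$ (i, j) = 1\<^sub>m k $$ (i, j)" .
qed auto

lemma minkowski_G_mult_self_left: "dim_row X = k \<Longrightarrow> minkowski_G k * (minkowski_G k * X) = X"
  using assoc_mult_mat_dims[of "minkowski_G k" "minkowski_G k" X] by simp

lemma ctrans_carrier [simp]: "M \<in> carrier_mat m n \<Longrightarrow> ctrans M \<in> carrier_mat n m"
  and ctrans_dims [simp]: "dim_row (ctrans M) = dim_col M" "dim_col (ctrans M) = dim_row M"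
  and ctrans_index [simp]: "i < dim_col M \<Longrightarrow> j < dim_row M \<Longrightarrow> ctrans M $$ (i, j) = cnj (M $$ (j, i))"
  unfolding ctrans_def by auto

lemma ctrans_ctrans [simp]: "ctrans (ctrans M) = M"
  by (rule eq_matI) auto

lemma ctrans_minkowski_G [simp]: "ctrans (minkowski_G k) = minkowski_G k"
  by (rule eq_matI) (auto simp: minkowski_G_def)

lemma ctrans_one [simp]: "ctrans (1\<^sub>m k) = 1\<^sub>m k"
  by (rule eq_matI) auto

lemma ctrans_zero [simp]: "ctrans (0\<^sub>m m n) = 0\<^sub>m n m"
  by (rule eq_matI) auto

lemma ctrans_minus:
  "A \<in> carrier_mat m n \<Longrightarrow> B \<in> carrier_mat m n \<Longrightarrow> ctrans (A - B) = ctrans A - ctrans B"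
  by (rule eq_matI) auto

lemma ctrans_mult:
  assumes "dim_col A = dim_row B"
  shows "ctrans (A * B) = ctrans B * ctrans A"
proof (rule eq_matI)
  fix i j assume "i < dim_row (ctrans B * ctrans A)" "j < dim_col (ctrans B * ctrans A)"
  then show "ctrans (A * B) $$ (i, j) = (ctrans B * ctrans A) $$ (i, j)"
    using assms by (simp add: scalar_prod_def cnj_sum mult.commute)
qed auto

lemma crank_ctrans:
  assumes M: "M \<in> carrier_mat m n"
  shows "crank (ctrans M) = crank M"
proof -
  have le: "crank (ctrans X) \<le> crank X" if X: "X \<in> carrier_mat p q" for X p q
  proof -
    obtain C F where C: "C \<in> carrier_mat p (crank X)" and F: "F \<in> carrier_mat (crank X) q"
      and "X = C * F"
      using vec_space.rank_factorization[OF X] crank_carrier[OF X] by metis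
    then have "ctrans X = ctrans F * ctrans C" using ctrans_mult by simp
    then have "vec_space.rank q (ctrans X) \<le> crank X"
      using vec_space.rank_le_of_factor[OF ctrans_carrier[OF F] ctrans_carrier[OF C]] by simp
    then show ?thesis using crank_carrier[OF ctrans_carrier[OF X]] by simp
  qed
  show ?thesis using le[OF M] le[OF ctrans_carrier[OF M]] by simp
qed

lemma mink_adj_carrier [simp]: "M \<in> carrier_mat m n \<Longrightarrow> mink_adj M \<in> carrier_mat n m"
  and mink_adj_dims [simp]: "dim_row (mink_adj M) = dim_col M" "dim_col (mink_adj M) = dim_row M"
  unfolding mink_adj_def by auto

lemma mink_adj_assoc: "mink_adj M = minkowski_G (dim_col M) * (ctrans M * minkowski_G (dim_row M))"
  unfolding mink_adj_def by (simp add: assoc_mult_mat_dims)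

lemma mink_adj_mink_adj [simp]: "mink_adj (mink_adj M) = M"
  unfolding mink_adj_assoc by (simp add: ctrans_mult assoc_mult_mat_dims minkowski_G_mult_self_left)

lemma mink_adj_mult: "dim_col A = dim_row B \<Longrightarrow> mink_adj (A * B) = mink_adj B * mink_adj A"
  unfolding mink_adj_assoc by (simp add: ctrans_mult assoc_mult_mat_dims minkowski_G_mult_self_left)

lemma mink_adj_minus:
  assumes A: "A \<in> carrier_mat m n" and B: "B \<in> carrier_mat m n"
  shows "mink_adj (A - B) = mink_adj A - mink_adj B"
proof -
  let ?G = minkowski_G
  have "mink_adj (A - B) = ?G n * (ctrans A - ctrans B) * ?G m"
    unfolding mink_adj_def using A B by (simp add: ctrans_minus)
  also have "\<dots> = (?G n * ctrans A - ?G n * ctrans B) * ?G m"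
    using mult_minus_distrib_mat[OF minkowski_G_carrier ctrans_carrier[OF A] ctrans_carrier[OF B]] by simp
  also have "\<dots> = mink_adj A - mink_adj B"
    unfolding mink_adj_def
    using minus_mult_distrib_mat[OF mult_carrier_mat[OF minkowski_G_carrier ctrans_carrier[OF A]]
        mult_carrier_mat[OF minkowski_G_carrier ctrans_carrier[OF B]] minkowski_G_carrier] A B
    by simp
  finally show ?thesis .
qed

lemma mink_adj_one [simp]: "mink_adj (1\<^sub>m k) = 1\<^sub>m k"
  unfolding mink_adj_def by simp

lemma mink_adj_zero [simp]: "mink_adj (0\<^sub>m m n) = 0\<^sub>m n m"
  unfolding mink_adj_def by simp

lemma crank_mink_adj:
  assumes M: "M \<in> carrier_mat m n"
  shows "crank (mink_adj M) = crank M"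
proof -
  let ?G = minkowski_G
  have "crank (mink_adj M) = vec_space.rank n (?G n * (ctrans M * ?G m))"
    using crank_carrier[OF mink_adj_carrier[OF M]] mink_adj_assoc[of M] M by simp
  also have "\<dots> = vec_space.rank n (ctrans M * ?G m)"
    by (rule vec_space.rank_mult_left_invertible[OF minkowski_G_carrier minkowski_G_carrier
          minkowski_G_mult_self mult_carrier_mat[OF ctrans_carrier[OF M] minkowski_G_carrier]])
  also have "\<dots> = vec_space.rank n (ctrans M)"
    by (rule vec_space.rank_mult_right_invertible[OF minkowski_G_carrier minkowski_G_carrier
          minkowski_G_mult_self ctrans_carrier[OF M]])
  also have "\<dots> = crank M" using crank_ctrans[OF M] crank_carrier[OF ctrans_carrier[OF M]] by simp
  finally show ?thesis .
qed

section \<open>The Minkowski inverse\<close>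

lemma is_minkowski_inverse_unique:
  assumes A: "A \<in> carrier_mat m n"
    and W1: "is_minkowski_inverse A W1" and W2: "is_minkowski_inverse A W2"
  shows "W1 = W2"
proof -
  have W1c: "W1 \<in> carrier_mat n m" and AWA1: "A * W1 * A = A" and WAW1: "W1 * A * W1 = W1"
    and adj_AW1: "mink_adj (A * W1) = A * W1" and adj_WA1: "mink_adj (W1 * A) = W1 * A"
    using W1 A unfolding is_minkowski_inverse_def by auto
  have W2c: "W2 \<in> carrier_mat n m" and AWA2: "A * W2 * A = A" and WAW2: "W2 * A * W2 = W2"
    and adj_AW2: "mink_adj (A * W2) = A * W2" and adj_WA2: "mink_adj (W2 * A) = W2 * A"
    using W2 A unfolding is_minkowski_inverse_def by auto
  note dims = carrier_matD[OF A] carrier_matD[OF W1c] carrier_matD[OF W2c]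
  have AW1: "A * W1 = A * W1 * (A * W2)"
  proof -
    have "A * W1 = A * W2 * A * W1" using AWA2 by simp
    also have "\<dots> = A * W2 * (A * W1)" by (simp add: dims assoc_mult_mat_dims)
    finally have "mink_adj (A * W1) = mink_adj (A * W2 * (A * W1))" by (rule arg_cong)
    also have "\<dots> = A * W1 * (A * W2)"
      using mink_adj_mult[of "A * W2" "A * W1"] adj_AW1 adj_AW2 dims by simp
    finally show ?thesis using adj_AW1 by simp
  qed
  have W2A: "W2 * A = W1 * A * (W2 * A)"
  proof -
    have "W2 * A = W2 * (A * W1 * A)" using AWA1 by simp
    also have "\<dots> = W2 * A * (W1 * A)" by (simp add: dims assoc_mult_mat_dims)
    finally have "mink_adj (W2 * A) = mink_adj (W2 * A * (W1 * A))" by (rule arg_cong)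
    also have "\<dots> = W1 * A * (W2 * A)"
      using mink_adj_mult[of "W2 * A" "W1 * A"] adj_WA1 adj_WA2 dims by simp
    finally show ?thesis using adj_WA2 by simp
  qed
  have "W1 = W1 * (A * W1)" using WAW1 by (simp add: dims assoc_mult_mat_dims)
  also have "\<dots> = W1 * (A * W1 * (A * W2))" using arg_cong[OF AW1, of "(*) W1"] by simp
  also have "\<dots> = W1 * A * W1 * (A * W2)" by (simp add: dims assoc_mult_mat_dims)
  also have "\<dots> = W1 * (A * W2)" using WAW1 by simp
  also have "\<dots> = W1 * (A * (W2 * A * W2))" using WAW2 by simp
  also have "\<dots> = W1 * A * (W2 * A) * W2" by (simp add: dims assoc_mult_mat_dims)
  also have "\<dots> = W2 * A * W2" using W2A by simp
  also have "\<dots> = W2" using WAW2 .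
  finally show ?thesis .
qed

text \<open>The algebra behind Zlobec's formula: if \<open>B = N U\<close> and \<open>B = S N\<close> for \<open>N = B A B\<close>, then
  \<open>T = U A S\<close> satisfies \<open>N T B = B = B T N\<close>. Products are kept right-associated.\<close>

lemma inner_inverse_absorb:
  fixes A B U S :: "'a::semiring_0 mat"
  assumes A: "A \<in> carrier_mat m n" and B: "B \<in> carrier_mat n m"
    and U: "U \<in> carrier_mat m m" and S: "S \<in> carrier_mat n n"
    and BU: "B * A * B * U = B" and SB: "S * B * A * B = B"
  shows "B * (A * (B * (U * (A * (S * B))))) = B" and "B * (U * (A * (S * (B * (A * B))))) = B"
proof -
  note [simp] = carrier_matD[OF A] carrier_matD[OF B] carrier_matD[OF U] carrier_matD[OF S]
    assoc_mult_mat_dims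
  have k1: "B * (A * (B * U)) = B" and k4: "S * (B * (A * B)) = B" using BU SB by simp_all
  have k1x: "B * (A * (B * (U * X))) = B * X" if "dim_row X = m" for X
    using arg_cong[OF k1, of "\<lambda>Y. Y * X"] that by simp
  have k4x: "S * (B * (A * (B * X))) = B * X" if "dim_row X = m" for X
    using arg_cong[OF k4, of "\<lambda>Y. Y * X"] that by simp
  have "B * (A * (B * (U * (A * (S * B)))))
      = B * (A * (B * (U * (A * (S * (B * (A * (B * U))))))))" by (simp add: k1)
  also have "\<dots> = B * (A * (B * (U * (A * (B * U)))))" by (simp add: k4x)
  also have "\<dots> = B" by (simp add: k1x k1)
  finally show "B * (A * (B * (U * (A * (S * B))))) = B" .
  have "B * (U * (A * (S * (B * (A * B))))) = B * (U * (A * B))" by (simp add: k4)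
  also have "\<dots> = S * (B * (A * (B * (U * (A * B)))))" by (simp add: k4x)
  also have "\<dots> = B" by (simp add: k1x k4)
  finally show "B * (U * (A * (S * (B * (A * B))))) = B" .
qed

lemma zlobec_identities:
  fixes A B U S U' S' :: "'a::semiring_0 mat"
  assumes A: "A \<in> carrier_mat m n" and B: "B \<in> carrier_mat n m"
    and U: "U \<in> carrier_mat m m" and S: "S \<in> carrier_mat n n"
    and U': "U' \<in> carrier_mat m m" and S': "S' \<in> carrier_mat n n"
    and BU: "B * A * B * U = B" and AS: "A * B * A * S = A"
    and UA: "U' * A * B * A = A" and SB: "S' * B * A * B = B"
  defines "W \<equiv> B * U * A * S' * B"
  shows "A * W * A = A" and "W * A * W = W"
    and "A * W = A * B * U" and "A * W = U' * A * B"
    and "W * A = B * A * S" and "W * A = S' * B * A"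
proof -
  note [simp] = carrier_matD[OF A] carrier_matD[OF B] carrier_matD[OF U] carrier_matD[OF S]
    carrier_matD[OF U'] carrier_matD[OF S'] assoc_mult_mat_dims
  note NTB = inner_inverse_absorb(1)[OF A B U S' BU SB]
    and BTN = inner_inverse_absorb(2)[OF A B U S' BU SB]
  have k1: "B * (A * (B * U)) = B" and k2: "A * (B * (A * S)) = A" using BU AS by simp_all
  have k3x: "U' * (A * (B * (A * X))) = A * X" if "dim_row X = n" for X
    using arg_cong[OF UA, of "\<lambda>Y. Y * X"] that by simp
  have k4x: "S' * (B * (A * (B * X))) = B * X" if "dim_row X = m" for X
    using arg_cong[OF SB, of "\<lambda>Y. Y * X"] that by simp
  have NTBx: "B * (A * (B * (U * (A * (S' * (B * X)))))) = B * X" if "dim_row X = m" for X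
    using arg_cong[OF NTB, of "\<lambda>Y. Y * X"] that by simp
  have BTNx: "B * (U * (A * (S' * (B * (A * (B * X)))))) = B * X" if "dim_row X = m" for X
    using arg_cong[OF BTN, of "\<lambda>Y. Y * X"] that by simp
  have "A * W * A = U' * (A * (B * (A * (B * (U * (A * (S' * (B * A))))))))"
    unfolding W_def by (simp add: k3x)
  also have "\<dots> = A" using UA by (simp add: NTBx)
  finally show "A * W * A = A" .
  show "W * A * W = W" unfolding W_def by (simp add: NTB)
  have "A * W = A * (B * (U * (A * (S' * (B * (A * (B * U)))))))" unfolding W_def by (simp add: k1)
  also have "\<dots> = A * B * U" by (simp add: BTNx)
  finally show "A * W = A * B * U" .
  have "A * W = U' * (A * (B * (A * W)))" unfolding W_def by (simp add: k3x)
  also have "\<dots> = U' * A * B" unfolding W_def by (simp add: NTB)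
  finally show "A * W = U' * A * B" .
  have "W * A = B * (U * (A * (S' * (B * (A * (B * (A * S)))))))" unfolding W_def by (simp add: k2)
  also have "\<dots> = B * A * S" by (simp add: BTNx)
  finally show "W * A = B * A * S" .
  have "W * A = S' * (B * (A * (B * (U * (A * (S' * (B * A)))))))" unfolding W_def by (simp add: k4x)
  also have "\<dots> = S' * B * A" by (simp add: NTBx)
  finally show "W * A = S' * B * A" .
qed

lemma is_minkowski_inverse_of_factors:
  assumes A: "A \<in> carrier_mat m n" and U: "U \<in> carrier_mat m m" and S: "S \<in> carrier_mat n n"
    and BABU: "mink_adj A * A * mink_adj A * U = mink_adj A"
    and ABAS: "A * mink_adj A * A * S = A"
  shows "is_minkowski_inverse A (mink_adj A * U * A * mink_adj S * mink_adj A)"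
proof -
  define B where "B = mink_adj A"
  have B: "B \<in> carrier_mat n m" unfolding B_def using A by simp
  have adj_B: "mink_adj B = A" unfolding B_def by simp
  note dims = carrier_matD[OF A] carrier_matD[OF B] carrier_matD[OF U] carrier_matD[OF S]
  have UA: "mink_adj U * A * B * A = A"
    using arg_cong[OF BABU, of mink_adj] by (simp add: dims mink_adj_mult assoc_mult_mat_dims B_def)
  have SB: "mink_adj S * B * A * B = B"
    using arg_cong[OF ABAS, of mink_adj] by (simp add: dims mink_adj_mult assoc_mult_mat_dims B_def)
  note Z = zlobec_identities[OF A B U S mink_adj_carrier[OF U] mink_adj_carrier[OF S]
      BABU[folded B_def] ABAS[folded B_def] UA SB]
  define W where "W = B * U * A * mink_adj S * B"
  have "mink_adj (A * B * U) = mink_adj U * A * B" and "mink_adj (B * A * S) = mink_adj S * B * A"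
    by (simp_all add: dims mink_adj_mult assoc_mult_mat_dims adj_B B_def[symmetric])
  then have "mink_adj (A * W) = A * W" and "mink_adj (W * A) = W * A"
    using Z(3-6) unfolding W_def by metis+
  moreover have "W \<in> carrier_mat n m" unfolding W_def using dims by (intro carrier_matI) simp_all
  ultimately show ?thesis
    unfolding is_minkowski_inverse_def W_def B_def[symmetric] using Z(1,2) A by simp
qed

lemma is_minkowski_inverse_exists:
  assumes A: "A \<in> carrier_mat m n"
    and rank_cond: "crank (mink_adj A * A * mink_adj A) = crank A"
  shows "\<exists>W. is_minkowski_inverse A W"
proof -
  define B where "B = mink_adj A"
  have B: "B \<in> carrier_mat n m" unfolding B_def using A by simp
  note dims = carrier_matD[OF A] carrier_matD[OF B]
  have "vec_space.rank n B \<le> vec_space.rank n (B * (A * B))"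
    using rank_cond crank_mink_adj[OF A] crank_carrier[OF B] crank_carrier[of "B * (A * B)" n m] A B
    unfolding B_def[symmetric] by (simp add: dims assoc_mult_mat_dims)
  then obtain U where U: "U \<in> carrier_mat m m" and "B = B * (A * B) * U"
    using vec_space.factor_through_of_rank_le[OF B mult_carrier_mat[OF A B] refl] by blast
  then have BABU: "B * A * B * U = B" by (simp add: dims assoc_mult_mat_dims)
  have "mink_adj (A * (B * A)) = B * (A * B)"
    unfolding B_def by (simp add: mink_adj_mult assoc_mult_mat_dims)
  then have "crank (A * (B * A)) = crank A"
    using rank_cond crank_mink_adj[OF mult_carrier_mat[OF A mult_carrier_mat[OF B A]]]
    unfolding B_def[symmetric] by (simp add: dims assoc_mult_mat_dims)
  then have "vec_space.rank m A \<le> vec_space.rank m (A * (B * A))"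
    using crank_carrier[OF A] crank_carrier[of "A * (B * A)" m n] A B by simp
  then obtain S where S: "S \<in> carrier_mat n n" and "A = A * (B * A) * S"
    using vec_space.factor_through_of_rank_le[OF A mult_carrier_mat[OF B A] refl] by blast
  then have ABAS: "A * B * A * S = A" by (simp add: dims assoc_mult_mat_dims)
  show ?thesis
    using is_minkowski_inverse_of_factors[OF A U S] BABU ABAS unfolding B_def by blast
qed

lemma minkowski_inverse_eqI:
  assumes A: "A \<in> carrier_mat m n" and W: "is_minkowski_inverse A W"
  shows "minkowski_inverse A = W"
  unfolding minkowski_inverse_def using is_minkowski_inverse_unique[OF A] W by blast

lemma is_minkowski_inverse_mink_adj:
  assumes A: "A \<in> carrier_mat m n" and W: "is_minkowski_inverse A W"
  shows "is_minkowski_inverse (mink_adj A) (mink_adj W)"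
proof -
  have Wc: "W \<in> carrier_mat n m" and AWA: "A * W * A = A" and WAW: "W * A * W = W"
    and adj_AW: "mink_adj (A * W) = A * W" and adj_WA: "mink_adj (W * A) = W * A"
    using W A unfolding is_minkowski_inverse_def by auto
  note dims = carrier_matD[OF A] carrier_matD[OF Wc]
  have "mink_adj A * mink_adj W = W * A" and "mink_adj W * mink_adj A = A * W"
    using adj_AW adj_WA by (simp_all add: dims mink_adj_mult)
  moreover have "mink_adj A * mink_adj W * mink_adj A = mink_adj A"
    and "mink_adj W * mink_adj A * mink_adj W = mink_adj W"
    using arg_cong[OF AWA, of mink_adj] arg_cong[OF WAW, of mink_adj]
    by (simp_all add: dims mink_adj_mult assoc_mult_mat_dims)
  ultimately show ?thesis
    unfolding is_minkowski_inverse_def using Wc A adj_AW adj_WA by simp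
qed

lemma mink_selfadjoint_idempotent_eq:
  assumes P: "P \<in> carrier_mat n n" and Q: "Q \<in> carrier_mat n n"
    and adj_P: "mink_adj P = P" and adj_Q: "mink_adj Q = Q" and QQ: "Q * Q = Q"
    and PQ: "P * Q = Q" and rank_le: "crank P \<le> crank Q"
  shows "Q = P"
proof -
  have "Q * P = Q" using arg_cong[OF PQ, of mink_adj] mink_adj_mult[of P Q] adj_P adj_Q P Q by simp
  moreover have "Q * P = P"
    using vec_space.idempotent_mult_absorb_of_rank_le[OF P Q QQ PQ] rank_le
      crank_carrier[OF P] crank_carrier[OF Q] by simp
  ultimately show ?thesis by simp
qed

lemma mink_kernel_projector_iff:
  assumes A: "A \<in> carrier_mat m n" and W: "is_minkowski_inverse A W"
  shows "X \<in> carrier_mat n n \<and> A * X = 0\<^sub>m m n \<and> mink_adj X = X \<and> X * X = X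
         \<and> crank X = n - crank A \<longleftrightarrow> X = 1\<^sub>m n - W * A"
proof -
  have Wc: "W \<in> carrier_mat n m" and AWA: "A * W * A = A" and WAW: "W * A * W = W"
    and adj_WA: "mink_adj (W * A) = W * A"
    using W A unfolding is_minkowski_inverse_def by auto
  note dims = carrier_matD[OF A] carrier_matD[OF Wc]
  define P where "P = W * A"
  have P: "P \<in> carrier_mat n n" unfolding P_def using Wc A by simp
  have PP: "P * P = P"
    unfolding P_def using arg_cong[OF WAW, of "\<lambda>Y. Y * A"] by (simp add: dims assoc_mult_mat_dims)
  have AP: "A * P = A" unfolding P_def using AWA by (simp add: dims assoc_mult_mat_dims)
  have rank_compl: "crank (1\<^sub>m n - P) = n - crank A"
    using rank_idempotent_add_rank_compl[OF P PP] rank_ginverse_mult[OF A Wc AWA]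
      crank_carrier[OF A] crank_carrier[OF minus_carrier_mat[OF P]]
    unfolding P_def by simp
  have adj_compl: "mink_adj (1\<^sub>m n - P) = 1\<^sub>m n - P"
    using mink_adj_minus[OF one_carrier_mat P] adj_WA unfolding P_def by simp
  show ?thesis
  proof
    assume "X \<in> carrier_mat n n \<and> A * X = 0\<^sub>m m n \<and> mink_adj X = X \<and> X * X = X
      \<and> crank X = n - crank A"
    then have X: "X \<in> carrier_mat n n" and AX: "A * X = 0\<^sub>m m n" and adj_X: "mink_adj X = X"
      and XX: "X * X = X" and rank_X: "crank X = n - crank A" by auto
    have "P * X = W * (A * X)" unfolding P_def using A Wc X by simp
    then have "(1\<^sub>m n - P) * X = X"
      using minus_mult_distrib_mat[OF one_carrier_mat P X] AX Wc X by simp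
    then have "X = 1\<^sub>m n - P"
      using mink_selfadjoint_idempotent_eq[OF minus_carrier_mat[OF P] X adj_compl adj_X XX]
        rank_X rank_compl by simp
    then show "X = 1\<^sub>m n - W * A" unfolding P_def .
  next
    assume "X = 1\<^sub>m n - W * A"
    then have X: "X = 1\<^sub>m n - P" unfolding P_def .
    have "A * X = 0\<^sub>m m n"
      unfolding X using mult_minus_distrib_mat[OF A one_carrier_mat P] AP A by simp
    then show "X \<in> carrier_mat n n \<and> A * X = 0\<^sub>m m n \<and> mink_adj X = X \<and> X * X = X
      \<and> crank X = n - crank A"
      unfolding X using minus_carrier_mat[OF P] idempotent_one_minus[OF P PP] adj_compl rank_compl by simp
  qed
qed

lemma mink_cokernel_projector_iff:
  assumes A: "A \<in> carrier_mat m n" and W: "is_minkowski_inverse A W"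
  shows "Y \<in> carrier_mat m m \<and> Y * A = 0\<^sub>m m n \<and> mink_adj Y = Y \<and> Y * Y = Y
         \<and> crank Y = m - crank A \<longleftrightarrow> Y = 1\<^sub>m m - A * W"
proof -
  have Wc: "W \<in> carrier_mat n m" and adj_AW: "mink_adj (A * W) = A * W"
    using W A unfolding is_minkowski_inverse_def by auto
  have "mink_adj W * mink_adj A = A * W"
    using adj_AW mink_adj_mult[of A W] A Wc by simp
  then have adj_iff: "Y \<in> carrier_mat m m \<and> mink_adj A * Y = 0\<^sub>m n m \<and> mink_adj Y = Y \<and> Y * Y = Y
      \<and> crank Y = m - crank A \<longleftrightarrow> Y = 1\<^sub>m m - A * W"
    using mink_kernel_projector_iff[OF mink_adj_carrier[OF A] is_minkowski_inverse_mink_adj[OF A W]]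
      crank_mink_adj[OF A] by simp
  have "Y * A = 0\<^sub>m m n \<longleftrightarrow> mink_adj A * Y = 0\<^sub>m n m"
    if Y: "Y \<in> carrier_mat m m" and adj_Y: "mink_adj Y = Y" for Y
  proof -
    have "mink_adj (Y * A) = mink_adj A * Y" using mink_adj_mult[of Y A] adj_Y Y A by simp
    then show ?thesis by (metis mink_adj_mink_adj mink_adj_zero)
  qed
  then show ?thesis using adj_iff by blast
qed

lemma mink_block_rank_eq_iff:
  assumes A: "A \<in> carrier_mat m n" and W: "is_minkowski_inverse A W" and Z: "Z \<in> carrier_mat n m"
  shows "crank (four_block_mat A (A * W) (W * A) Z) = crank A \<longleftrightarrow> Z = W"
proof -
  have Wc: "W \<in> carrier_mat n m" and AWA: "A * W * A = A" and WAW: "W * A * W = W"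
    using W A unfolding is_minkowski_inverse_def by auto
  have "crank (four_block_mat A (A * W) (W * A) Z) = crank A + crank (Z - W)"
    using rank_block_reflexive_ginverse[OF A Wc Z AWA WAW] crank_carrier[OF A]
      crank_carrier[OF minus_carrier_mat[OF Wc]] crank_carrier[of _ "m + n" "n + m"] A Z
    by simp
  moreover have "crank (Z - W) = 0 \<longleftrightarrow> Z = W"
  proof
    assume "crank (Z - W) = 0"
    then have "Z - W = 0\<^sub>m n m"
      using vec_space.rank_eq_0_imp_zero[OF minus_carrier_mat[OF Wc]] crank_carrier[OF minus_carrier_mat[OF Wc]]
      by simp
    moreover have "Z = W + (Z - W)" using Z Wc by (intro eq_matI) auto
    ultimately show "Z = W" using Wc by simp
  next
    assume "Z = W"
    then show "crank (Z - W) = 0" using Wc crank_carrier[OF zero_carrier_mat] vec_space.rank_0I by simp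
  qed
  ultimately show ?thesis by simp
qed

theorem theorem7p5:
  fixes A :: "complex mat" and m n r :: nat
  assumes "0 < m" and "0 < n"
    and "A \<in> carrier_mat m n"
    and "crank A = r"
    and "crank (mink_adj A * A * mink_adj A) = crank A"
  shows "(\<exists>!X. X \<in> carrier_mat n n \<and> A * X = 0\<^sub>m m n \<and> mink_adj X = X \<and>
              X * X = X \<and> crank X = n - r)
       \<and> (\<exists>!Y. Y \<in> carrier_mat m m \<and> Y * A = 0\<^sub>m m n \<and> mink_adj Y = Y \<and>
              Y * Y = Y \<and> crank Y = m - r)
       \<and> (\<forall>X Y. (X \<in> carrier_mat n n \<and> A * X = 0\<^sub>m m n \<and> mink_adj X = X \<and>
                   X * X = X \<and> crank X = n - r)
              \<longrightarrow> (Y \<in> carrier_mat m m \<and> Y * A = 0\<^sub>m m n \<and> mink_adj Y = Y \<and>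
                   Y * Y = Y \<and> crank Y = m - r)
              \<longrightarrow> (\<exists>!Z. Z \<in> carrier_mat n m \<and>
                     crank (four_block_mat A (1\<^sub>m m - Y) (1\<^sub>m n - X) Z) = crank A)
                  \<and> is_minkowski_inverse A (minkowski_inverse A)
                  \<and> X = 1\<^sub>m n - minkowski_inverse A * A
                  \<and> Y = 1\<^sub>m m - A * minkowski_inverse A
                  \<and> (\<forall>Z. Z \<in> carrier_mat n m \<and>
                     crank (four_block_mat A (1\<^sub>m m - Y) (1\<^sub>m n - X) Z) = crank A
                     \<longrightarrow> Z = minkowski_inverse A))"
proof -
  note A = \<open>A \<in> carrier_mat m n\<close>
  define W where "W = minkowski_inverse A"
  obtain W' where "is_minkowski_inverse A W'"
    using is_minkowski_inverse_exists[OF A \<open>crank (mink_adj A * A * mink_adj A) = crank A\<close>] by blast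
  then have W: "is_minkowski_inverse A W" unfolding W_def using minkowski_inverse_eqI[OF A] by simp
  then have Wc: "W \<in> carrier_mat n m" using A unfolding is_minkowski_inverse_def by simp
  have "1\<^sub>m n - (1\<^sub>m n - W * A) = W * A" and "1\<^sub>m m - (1\<^sub>m m - A * W) = A * W"
    using A Wc by (auto intro!: eq_matI)
  then show ?thesis
    unfolding W_def[symmetric] \<open>crank A = r\<close>[symmetric]
      mink_kernel_projector_iff[OF A W] mink_cokernel_projector_iff[OF A W]
    using W mink_block_rank_eq_iff[OF A W] Wc by auto
qed

end
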